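(* Let $\Omega_2=\{\omega_1,\omega_2\}$ with $\omega_1\neq\omega_2$, and $\mathcal{A}_2=2^{\Omega_2}$. Let $1$ denote the coevent $\omega_1^*\oplus\omega_2^*\oplus\omega_1^*\omega_2^*$ (equivalently, $1(A)=1$ iff $A\neq\emptyset$). A $q$-measure $\mu$ on $\mathcal{A}_2$ actualizes $1$ if and only if $\mu(\{\omega_1\})\neq 0$, $\mu(\{\omega_2\})\neq 0$ and $\mu(\Omega_2)=\max(\mu(\{\omega_1\}),\mu(\{\omega_2\}))$.
   Context: Let $\Omega$ be a finite nonempty set and $\mathcal{A}=2^\Omega$. A coevent is a map $\phi:\mathcal{A}\to\{0,1\}$ with $\phi(\emptyset)=0$. For $\omega\in\Omega$ the evaluation map $\omega^*$ is the coevent with $\omega^*(A)=1$ if $\omega\in A$ and $0$ otherwise. Coevents are combined pointwise: $(\phi\oplus\psi)(A)=\phi(A)+\psi(A) \bmod 2$ and $(\phi\psi)(A)=\phi(A)\psi(A)$. For $f:\Omega\to[0,\infty)$ and a coevent $\phi$, the $q$-integral is $\int f\,d\phi=\int_0^\infty \phi(\{\omega\in\Omega: f(\omega)>\lambda\})\,d\lambda$ (Lebesgue measure in $\lambda$), and for $A\in\mathcal{A}$, $\int_A f\,d\phi=\int f\chi_A\,d\phi$. A $q$-measure is a map $\mu:\mathcal{A}\to[0,\infty)$ such that for all pairwise disjoint $A,B,C\in\mathcal{A}$: $\mu(A\cup B\cup C)=\mu(A\cup B)+\mu(A\cup C)+\mu(B\cup C)-\mu(A)-\mu(B)-\mu(C)$.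 The $q$-measure $\mu$ actualizes $\phi$ if there is a symmetric function $f:\Omega\times\Omega\to(0,\infty)$ such that for all $A\in\mathcal{A}$, $\mu(A)=\int g_A\,d\phi$, where $g_A(\omega')=\int_A f(\cdot,\omega')\,d\phi$ (the $q$-integral over $A$ of $\omega\mapsto f(\omega,\omega')$). *)

theory Defs
  imports "HOL-Analysis.Analysis"
begin

text \<open>Coevents on the power set of a finite carrier Omega are represented as maps
  from sets to nat with values in {0,1}; arithmetic is mod 2.\<close>

definition coevent :: "'a set \<Rightarrow> ('a set \<Rightarrow> nat) \<Rightarrow> bool" where
  "coevent Omega phi \<longleftrightarrow> phi {} = 0 \<and> (\<forall>A. A \<subseteq> Omega \<longrightarrow> phi A \<in> {0, 1})"

definition eval_map :: "'a \<Rightarrow> ('a set \<Rightarrow> nat)" where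
  "eval_map w = (\<lambda>A. if w \<in> A then 1 else 0)"

definition co_plus :: "('a set \<Rightarrow> nat) \<Rightarrow> ('a set \<Rightarrow> nat) \<Rightarrow> ('a set \<Rightarrow> nat)" where
  "co_plus phi psi = (\<lambda>A. (phi A + psi A) mod 2)"

definition co_mult :: "('a set \<Rightarrow> nat) \<Rightarrow> ('a set \<Rightarrow> nat) \<Rightarrow> ('a set \<Rightarrow> nat)" where
  "co_mult phi psi = (\<lambda>A. phi A * psi A)"

definition q_integral :: "'a set \<Rightarrow> ('a set \<Rightarrow> nat) \<Rightarrow> ('a \<Rightarrow> real) \<Rightarrow> real" where
  "q_integral Omega phi f =
     (LINT l:{0..}|lborel. real (phi {w \<in> Omega. f w > l}))"

definition q_integral_on :: "'a set \<Rightarrow> ('a set \<Rightarrow> nat) \<Rightarrow> 'a set \<Rightarrow> ('a \<Rightarrow> real) \<Rightarrow> real" where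
  "q_integral_on Omega phi A f = q_integral Omega phi (\<lambda>w. f w * indicator A w)"

definition q_measure :: "'a set \<Rightarrow> ('a set \<Rightarrow> real) \<Rightarrow> bool" where
  "q_measure Omega mu \<longleftrightarrow>
     (\<forall>A. A \<subseteq> Omega \<longrightarrow> mu A \<ge> 0) \<and>
     (\<forall>A B C. A \<subseteq> Omega \<and> B \<subseteq> Omega \<and> C \<subseteq> Omega \<and>
        A \<inter> B = {} \<and> A \<inter> C = {} \<and> B \<inter> C = {} \<longrightarrow>
        mu (A \<union> B \<union> C) = mu (A \<union> B) + mu (A \<union> C) + mu (B \<union> C) - mu A - mu B - mu C)"

definition actualizes :: "'a set \<Rightarrow> ('a set \<Rightarrow> real) \<Rightarrow> ('a set \<Rightarrow> nat) \<Rightarrow> bool" where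
  "actualizes Omega mu phi \<longleftrightarrow>
     (\<exists>f :: 'a \<Rightarrow> 'a \<Rightarrow> real.
        (\<forall>x\<in>Omega. \<forall>y\<in>Omega. f x y = f y x \<and> f x y > 0) \<and>
        (\<forall>A. A \<subseteq> Omega \<longrightarrow>
           mu A = q_integral Omega phi (\<lambda>w'. q_integral_on Omega phi A (\<lambda>w. f w w'))))"

end

theory Submission
  imports Defs
begin

text \<open>
  On a finite nonempty carrier the coevent that is 1 exactly on nonempty
  sets integrates a function to the positive part of its maximum: the level set
  {w. f w > l} is nonempty precisely for l below the maximum.  The coevent
  w1* + w2* + w1* w2* (mod 2) is this coevent on the two-point carrier, so the set
  function induced by a positive symmetric kernel f is a maximum of kernel values:
  f11 or f12 on {w1}, f12 or f22 on {w2}, and the largest of all on {w1, w2}.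
  Necessity: these values are positive and the value on {w1, w2} is the larger of
  the two singleton values.  Sufficiency: the kernel with diagonal mu {w1}, mu {w2}
  and off-diagonal entry min (mu {w1}) (mu {w2}) reproduces mu, using that every
  q-measure vanishes on the empty set.
\<close>

definition induced_measure ::
    "'a set \<Rightarrow> ('a set \<Rightarrow> nat) \<Rightarrow> ('a \<Rightarrow> 'a \<Rightarrow> real) \<Rightarrow> 'a set \<Rightarrow> real" where
  "induced_measure Omega phi f A =
     q_integral Omega phi (\<lambda>w'. q_integral_on Omega phi A (\<lambda>w. f w w'))"

lemma actualizes_iff_induced:
  "actualizes Omega mu phi \<longleftrightarrow>
     (\<exists>f. (\<forall>x\<in>Omega. \<forall>y\<in>Omega. f x y = f y x \<and> f x y > 0) \<and>
          (\<forall>A. A \<subseteq> Omega \<longrightarrow> mu A = induced_measure Omega phi f A))"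
  unfolding actualizes_def induced_measure_def ..

text \<open>A q-measure vanishes on the empty set (take A = B = C = {} in the grade-2 law).\<close>
lemma q_measure_empty:
  assumes "q_measure Omega mu"
  shows "mu {} = 0"
proof -
  have "mu ({} \<union> {} \<union> {}) = mu ({} \<union> {}) + mu ({} \<union> {}) + mu ({} \<union> {}) - mu {} - mu {} - mu {}"
    using assms unfolding q_measure_def by blast
  then show ?thesis by simp
qed

lemma q_integral_nonempty_coevent:
  assumes "finite Omega" "Omega \<noteq> {}"
    and phi: "\<And>A. A \<subseteq> Omega \<Longrightarrow> phi A = (if A = {} then 0 else 1)"
  shows "q_integral Omega phi f = max 0 (Max (f ` Omega))"
proof -
  define M where "M = Max (f ` Omega)"
  have level_nonempty: "{w \<in> Omega. f w > l} \<noteq> {} \<longleftrightarrow> l < M" for l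
    using assms(1,2) by (auto simp: M_def Max_gr_iff)
  have "indicator {0..} l *\<^sub>R real (phi {w \<in> Omega. f w > l}) = indicator {0..<M} l" for l :: real
    using level_nonempty[of l] phi[of "{w \<in> Omega. f w > l}"] by (auto simp: indicator_def)
  then have "q_integral Omega phi f = integral\<^sup>L lborel (indicator {0..<M} :: real \<Rightarrow> real)"
    unfolding q_integral_def set_lebesgue_integral_def by simp
  also have "\<dots> = max 0 M"
    by (cases "0 \<le> M") auto
  finally show ?thesis by (simp add: M_def)
qed

lemma unit_coevent_value:
  "co_plus (co_plus (eval_map w1) (eval_map w2)) (co_mult (eval_map w1) (eval_map w2)) A
     = (if w1 \<in> A \<or> w2 \<in> A then 1 else 0)"
  by (auto simp: co_plus_def co_mult_def eval_map_def)

lemma q_integral_unit_coevent: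
  "q_integral {w1, w2}
     (co_plus (co_plus (eval_map w1) (eval_map w2)) (co_mult (eval_map w1) (eval_map w2))) f
   = max 0 (max (f w1) (f w2))"
proof -
  have "A \<subseteq> {w1, w2} \<Longrightarrow>
      co_plus (co_plus (eval_map w1) (eval_map w2)) (co_mult (eval_map w1) (eval_map w2)) A
      = (if A = {} then 0 else 1)" for A
    by (auto simp: unit_coevent_value)
  then show ?thesis
    by (subst q_integral_nonempty_coevent) auto
qed

lemma induced_measure_two_points:
  fixes f :: "'a \<Rightarrow> 'a \<Rightarrow> real"
  assumes "w1 \<noteq> w2"
    and pos: "f w1 w1 > 0" "f w1 w2 > 0" "f w2 w2 > 0" and sym: "f w2 w1 = f w1 w2"
  defines "\<nu> \<equiv> induced_measure {w1, w2}
     (co_plus (co_plus (eval_map w1) (eval_map w2)) (co_mult (eval_map w1) (eval_map w2))) f"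
  shows "\<nu> {} = 0"
    and "\<nu> {w1} = max (f w1 w1) (f w1 w2)"
    and "\<nu> {w2} = max (f w1 w2) (f w2 w2)"
    and "\<nu> {w1, w2} = max (f w1 w1) (max (f w1 w2) (f w2 w2))"
  using assms(1) pos
  by (auto simp: \<nu>_def induced_measure_def q_integral_on_def q_integral_unit_coevent
                 indicator_def sym max_def)

lemma actualized_conditions:
  assumes "w1 \<noteq> w2"
    and "actualizes {w1, w2} mu
           (co_plus (co_plus (eval_map w1) (eval_map w2)) (co_mult (eval_map w1) (eval_map w2)))"
  shows "mu {w1} \<noteq> 0 \<and> mu {w2} \<noteq> 0 \<and> mu {w1, w2} = max (mu {w1}) (mu {w2})"
proof -
  obtain f where f: "\<forall>x\<in>{w1, w2}. \<forall>y\<in>{w1, w2}. f x y = f y x \<and> f x y > 0"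
    and mu: "\<And>A. A \<subseteq> {w1, w2} \<Longrightarrow> mu A = induced_measure {w1, w2}
        (co_plus (co_plus (eval_map w1) (eval_map w2)) (co_mult (eval_map w1) (eval_map w2))) f A"
    using assms(2) unfolding actualizes_iff_induced by blast
  have pos: "f w1 w1 > 0" "f w1 w2 > 0" "f w2 w2 > 0" and sym: "f w2 w1 = f w1 w2"
    using f by blast+
  note kernel_values = induced_measure_two_points[OF assms(1) pos sym]
  show ?thesis
    using mu[of "{w1}"] mu[of "{w2}"] mu[of "{w1, w2}"] kernel_values pos
    by (auto simp: max_def)
qed

lemma conditions_actualize:
  assumes "w1 \<noteq> w2" and "q_measure {w1, w2} mu"
    and pos: "mu {w1} > 0" "mu {w2} > 0"
    and top: "mu {w1, w2} = max (mu {w1}) (mu {w2})"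
  shows "actualizes {w1, w2} mu
           (co_plus (co_plus (eval_map w1) (eval_map w2)) (co_mult (eval_map w1) (eval_map w2)))"
proof -
  define f where "f x y = (if x = w1 \<and> y = w1 then mu {w1}
                           else if x = w2 \<and> y = w2 then mu {w2}
                           else min (mu {w1}) (mu {w2}))" for x y
  have f_vals: "f w1 w1 = mu {w1}" "f w2 w2 = mu {w2}"
      "f w1 w2 = min (mu {w1}) (mu {w2})" "f w2 w1 = f w1 w2"
    using assms(1) by (auto simp: f_def)
  have f_pos: "f w1 w1 > 0" "f w1 w2 > 0" "f w2 w2 > 0"
    using f_vals pos by auto
  have kernel: "\<forall>x\<in>{w1, w2}. \<forall>y\<in>{w1, w2}. f x y = f y x \<and> f x y > 0"
    using f_vals f_pos by auto
  note kernel_values = induced_measure_two_points[OF assms(1) f_pos f_vals(4)]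
  have "mu A = induced_measure {w1, w2}
      (co_plus (co_plus (eval_map w1) (eval_map w2)) (co_mult (eval_map w1) (eval_map w2))) f A"
    if "A \<subseteq> {w1, w2}" for A
  proof -
    from that consider "A = {}" | "A = {w1}" | "A = {w2}" | "A = {w1, w2}" by blast
    then show ?thesis
      using kernel_values f_vals top q_measure_empty[OF assms(2)]
      by cases (auto simp: max_def min_def)
  qed
  with kernel show ?thesis
    unfolding actualizes_iff_induced by blast
qed

theorem theorem4p3:
  fixes w1 w2 :: 'a and mu :: "'a set \<Rightarrow> real"
  assumes "w1 \<noteq> w2"
    and "q_measure {w1, w2} mu"
  shows "actualizes {w1, w2} mu
           (co_plus (co_plus (eval_map w1) (eval_map w2)) (co_mult (eval_map w1) (eval_map w2)))
         \<longleftrightarrow> mu {w1} \<noteq> 0 \<and> mu {w2} \<noteq> 0 \<and> mu {w1, w2} = max (mu {w1}) (mu {w2})"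
proof
  assume "actualizes {w1, w2} mu
           (co_plus (co_plus (eval_map w1) (eval_map w2)) (co_mult (eval_map w1) (eval_map w2)))"
  then show "mu {w1} \<noteq> 0 \<and> mu {w2} \<noteq> 0 \<and> mu {w1, w2} = max (mu {w1}) (mu {w2})"
    using actualized_conditions[OF assms(1)] by blast
next
  assume cond: "mu {w1} \<noteq> 0 \<and> mu {w2} \<noteq> 0 \<and> mu {w1, w2} = max (mu {w1}) (mu {w2})"
  have "mu {w1} \<ge> 0" "mu {w2} \<ge> 0"
    using assms(2) unfolding q_measure_def by auto
  with cond have "mu {w1} > 0" "mu {w2} > 0"
    by auto
  then show "actualizes {w1, w2} mu
           (co_plus (co_plus (eval_map w1) (eval_map w2)) (co_mult (eval_map w1) (eval_map w2)))"
    using conditions_actualize[OF assms] cond by blast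
qed

end
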